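(* Let $Y$ be a complex Banach space and let $I\subseteq\mathbb R^n$ satisfy $I+I\subseteq I$, suppose that for every $\mathbf t'\in\mathbb R^n$ there exists a finite $M>0$ with $\mathbf t'+I_M\subseteq I$, and suppose that $\mathbb R^n\setminus[(I\cup(-I))+(I\cup(-I))]$ is bounded. If $F:\mathbb R^n\to Y$ and $G:\mathbb R^n\to Y$ are Bohr almost periodic and $F(\mathbf t)=G(\mathbf t)$ for all $\mathbf t\in I$, then $F(\mathbf t)=G(\mathbf t)$ for all $\mathbf t\in\mathbb R^n$.
   Context: $I_M:=\{\lambda\in I:|\lambda|\ge M\}$. A continuous $F:\mathbb R^n\to Y$ is Bohr almost periodic if for every $\epsilon>0$ there exists $l>0$ such that every closed Euclidean ball of radius $l$ contains some $\tau$ with $\|F(\mathbf t+\tau)-F(\mathbf t)\|_Y\le\epsilon$ for all $\mathbf t\in\mathbb R^n$. *)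

theory Defs
  imports "HOL-Analysis.Analysis"
begin

definition trunc_set :: "('a::real_normed_vector) set \<Rightarrow> real \<Rightarrow> 'a set" where
  "trunc_set I M = {x\<in>I. norm x \<ge> M}"

definition bohr_almost_periodic :: "(real ^ 'n \<Rightarrow> 'y::real_normed_vector) \<Rightarrow> bool" where
  "bohr_almost_periodic F \<longleftrightarrow> continuous_on UNIV F \<and>
     (\<forall>\<epsilon>>0. \<exists>l>0. \<forall>c. \<exists>\<tau>\<in>cball c l. \<forall>t. norm (F (t + \<tau>) - F t) \<le> \<epsilon>)"

end

theory Submission
  imports Defs
begin

text \<open>
  Since \<open>I\<close> is closed under addition and the complement of \<open>(I \<union> -I) + (I \<union> -I)\<close> is bounded,
  \<open>I\<close> contains a nonzero \<open>w\<close> and with it all positive integer multiples of \<open>w\<close>. Given \<open>t\<close>,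
  a large multiple \<open>v\<close> of \<open>w\<close> therefore satisfies \<open>t + m v \<in> I\<close> for all \<open>m \<ge> 1\<close>. The
  translates of a Bohr almost periodic function are totally bounded in the sup-norm, so by
  pigeonhole some \<open>k v\<close> with \<open>k \<ge> 1\<close> is a common \<open>\<epsilon>\<close>-almost period of \<open>F\<close> and \<open>G\<close>, and
  \<open>F t \<approx> F (t + k v) = G (t + k v) \<approx> G t\<close>.
\<close>

lemma bohr_almost_periodic_continuous:
  "bohr_almost_periodic F \<Longrightarrow> continuous_on UNIV F"
  unfolding bohr_almost_periodic_def by blast

lemma bohr_almost_periodicD:
  assumes "bohr_almost_periodic F" and "e > 0"
  obtains l where "l > 0" and "\<And>c. \<exists>\<tau>\<in>cball c l. \<forall>t. dist (F (t + \<tau>)) (F t) \<le> e"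
  using assms unfolding bohr_almost_periodic_def dist_norm by blast

lemma bohr_almost_periodic_uniformly_continuous:
  fixes F :: "real ^ 'n \<Rightarrow> 'y::real_normed_vector"
  assumes ap: "bohr_almost_periodic F"
  shows "uniformly_continuous_on UNIV F"
  unfolding uniformly_continuous_on_def
proof (intro allI impI)
  fix e :: real
  assume "e > 0"
  then obtain l where "l > 0"
    and per: "\<And>c. \<exists>\<tau>\<in>cball c l. \<forall>t. dist (F (t + \<tau>)) (F t) \<le> e / 3"
    using bohr_almost_periodicD[OF ap, of "e / 3"] by auto
  let ?K = "cball (0 :: real ^ 'n) (l + 1)"
  have "uniformly_continuous_on ?K F"
    using bohr_almost_periodic_continuous[OF ap]
    by (meson compact_cball compact_uniformly_continuous continuous_on_subset subset_UNIV)
  moreover have "e / 3 > 0"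
    using \<open>e > 0\<close> by simp
  ultimately obtain d where "d > 0"
    and uc: "\<And>x y. x \<in> ?K \<Longrightarrow> y \<in> ?K \<Longrightarrow> dist y x < d \<Longrightarrow> dist (F y) (F x) < e / 3"
    unfolding uniformly_continuous_on_def by metis
  show "\<exists>d>0. \<forall>x\<in>UNIV. \<forall>y\<in>UNIV. dist y x < d \<longrightarrow> dist (F y) (F x) < e"
  proof (intro exI[of _ "min d 1"] conjI ballI impI)
    fix x y :: "real ^ 'n"
    assume dxy: "dist y x < min d 1"
    \<comment> \<open>an almost period near \<open>-x\<close> moves \<open>x\<close> and \<open>y\<close> into the compact ball \<open>?K\<close>\<close>
    obtain \<tau> where \<tau>: "\<tau> \<in> cball (- x) l" and p: "\<And>t. dist (F (t + \<tau>)) (F t) \<le> e / 3"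
      using per by blast
    have "norm (x + \<tau>) \<le> l"
      using \<tau> by (simp add: dist_norm norm_minus_commute add.commute)
    moreover have "norm (y + \<tau>) \<le> norm (x + \<tau>) + norm (y - x)"
      using norm_triangle_ineq[of "x + \<tau>" "y - x"] by (simp add: add.commute)
    moreover have "norm (y - x) < 1"
      using dxy by (simp add: dist_norm)
    ultimately have "x + \<tau> \<in> ?K" "y + \<tau> \<in> ?K"
      unfolding mem_cball_0 by linarith+
    moreover have "dist (y + \<tau>) (x + \<tau>) < d"
      using dxy by (simp add: dist_norm)
    ultimately have "dist (F (y + \<tau>)) (F (x + \<tau>)) < e / 3"
      by (rule uc)
    moreover have "dist (F y) (F x)
        \<le> dist (F (y + \<tau>)) (F y) + dist (F (y + \<tau>)) (F (x + \<tau>)) + dist (F (x + \<tau>)) (F x)"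
      using dist_triangle[of "F y" "F x" "F (x + \<tau>)"] dist_triangle[of "F y" "F (x + \<tau>)" "F (y + \<tau>)"]
      by (simp add: dist_commute)
    ultimately show "dist (F y) (F x) < e"
      using p[of x] p[of y] by linarith
  qed (use \<open>d > 0\<close> in simp)
qed

lemma bohr_almost_periodic_finite_translation_net:
  fixes F :: "real ^ 'n \<Rightarrow> 'y::real_normed_vector"
  assumes ap: "bohr_almost_periodic F" and "e > 0"
  obtains S :: "(real ^ 'n) set"
  where "finite S" and "\<And>s. \<exists>r\<in>S. \<forall>t. dist (F (t + s)) (F (t + r)) \<le> e"
proof -
  have half: "e / 2 > 0"
    using \<open>e > 0\<close> by simp
  obtain d where "d > 0" and uc: "\<And>x y. dist y x < d \<Longrightarrow> dist (F y) (F x) < e / 2"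
    using bohr_almost_periodic_uniformly_continuous[OF ap] half
    unfolding uniformly_continuous_on_def by (metis UNIV_I)
  obtain l where per: "\<And>c. \<exists>\<tau>\<in>cball c l. \<forall>t. dist (F (t + \<tau>)) (F t) \<le> e / 2"
    using bohr_almost_periodicD[OF ap half] by blast
  have "compact (cball (0 :: real ^ 'n) l)"
    by simp
  then obtain S :: "(real ^ 'n) set" where "finite S" and S: "cball 0 l \<subseteq> (\<Union>r\<in>S. ball r d)"
    using \<open>d > 0\<close> unfolding compact_eq_totally_bounded by blast
  have "\<exists>r\<in>S. \<forall>t. dist (F (t + s)) (F (t + r)) \<le> e" for s
  proof -
    obtain \<tau> where "\<tau> \<in> cball s l" and p: "\<And>t. dist (F (t + \<tau>)) (F t) \<le> e / 2"
      using per by blast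
    then have "s - \<tau> \<in> cball 0 l"
      by (simp add: dist_norm norm_minus_commute)
    then obtain r where "r \<in> S" and r: "dist r (s - \<tau>) < d"
      using S by (auto simp: dist_commute)
    have "dist (F (t + s)) (F (t + r)) \<le> e" for t
    proof -
      have "dist (F (t + s)) (F (t + (s - \<tau>))) \<le> e / 2"
        using p[of "t + (s - \<tau>)"] by simp
      moreover have "dist (t + (s - \<tau>)) (t + r) < d"
        using r by (simp only: dist_add_cancel dist_commute)
      then have "dist (F (t + (s - \<tau>))) (F (t + r)) < e / 2"
        by (rule uc)
      ultimately show ?thesis
        using dist_triangle[of "F (t + s)" "F (t + r)" "F (t + (s - \<tau>))"] by linarith
    qed
    with \<open>r \<in> S\<close> show ?thesis by blast
  qed
  with \<open>finite S\<close> that show ?thesis by blast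
qed

lemma nat_pigeonhole_lt:
  fixes c :: "nat \<Rightarrow> 'a"
  assumes "finite (range c)"
  obtains a b where "a < b" and "c a = c b"
proof -
  have "\<not> inj c"
    using assms range_inj_infinite by blast
  then obtain i j where "i \<noteq> j" "c i = c j"
    unfolding inj_def by blast
  then show ?thesis
    using that by (metis linorder_neqE_nat)
qed

lemma bohr_almost_periodic_common_period_multiple:
  fixes F G :: "real ^ 'n \<Rightarrow> 'y::real_normed_vector"
  assumes "bohr_almost_periodic F" "bohr_almost_periodic G" and "e > 0"
  obtains k :: nat where "k \<ge> 1"
    and "\<And>t. dist (F (t + real k *\<^sub>R v)) (F t) \<le> e"
    and "\<And>t. dist (G (t + real k *\<^sub>R v)) (G t) \<le> e"
proof -
  obtain SF where "finite SF" and "\<And>s. \<exists>r\<in>SF. \<forall>t. dist (F (t + s)) (F (t + r)) \<le> e / 2"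
    using bohr_almost_periodic_finite_translation_net[OF assms(1), of "e / 2"] \<open>e > 0\<close> by auto
  then obtain fF where fF: "\<And>s. fF s \<in> SF" "\<And>s t. dist (F (t + s)) (F (t + fF s)) \<le> e / 2"
    by metis
  obtain SG where "finite SG" and "\<And>s. \<exists>r\<in>SG. \<forall>t. dist (G (t + s)) (G (t + r)) \<le> e / 2"
    using bohr_almost_periodic_finite_translation_net[OF assms(2), of "e / 2"] \<open>e > 0\<close> by auto
  then obtain fG where fG: "\<And>s. fG s \<in> SG" "\<And>s t. dist (G (t + s)) (G (t + fG s)) \<le> e / 2"
    by metis
  \<comment> \<open>two multiples of \<open>v\<close> with the same pair of net representatives differ by a common almost period\<close>
  define c where "c j = (fF (real j *\<^sub>R v), fG (real j *\<^sub>R v))" for j :: nat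
  have "range c \<subseteq> SF \<times> SG"
    using fF(1) fG(1) by (auto simp: c_def)
  then have "finite (range c)"
    by (rule finite_subset) (use \<open>finite SF\<close> \<open>finite SG\<close> in simp)
  then obtain a b where "a < b" and "c a = c b"
    by (rule nat_pigeonhole_lt)
  have close: "dist (H (t + real (b - a) *\<^sub>R v)) (H t) \<le> e"
    if "\<And>s t. dist (H (t + s)) (H (t + f s)) \<le> e / 2" and "f (real a *\<^sub>R v) = f (real b *\<^sub>R v)"
    for H :: "real ^ 'n \<Rightarrow> 'y" and f t
  proof -
    define u where "u = t - real a *\<^sub>R v"
    have "dist (H (t + real (b - a) *\<^sub>R v)) (H t) = dist (H (u + real b *\<^sub>R v)) (H (u + real a *\<^sub>R v))"
      using \<open>a < b\<close> by (simp add: u_def algebra_simps)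
    moreover have "dist (H (u + real a *\<^sub>R v)) (H (u + f (real a *\<^sub>R v))) \<le> e / 2"
      using that(1)[of u "real a *\<^sub>R v"] .
    moreover have "dist (H (u + real b *\<^sub>R v)) (H (u + f (real a *\<^sub>R v))) \<le> e / 2"
      using that(1)[of u "real b *\<^sub>R v"] that(2) by simp
    ultimately show ?thesis
      using dist_triangle2[of "H (u + real b *\<^sub>R v)" "H (u + real a *\<^sub>R v)" "H (u + f (real a *\<^sub>R v))"]
      by linarith
  qed
  show ?thesis
  proof (rule that[of "b - a"])
    show "b - a \<ge> 1"
      using \<open>a < b\<close> by simp
    show "dist (F (t + real (b - a) *\<^sub>R v)) (F t) \<le> e" for t
      by (rule close[where H = F, OF fF(2)]) (use \<open>c a = c b\<close> in \<open>simp add: c_def\<close>)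
    show "dist (G (t + real (b - a) *\<^sub>R v)) (G t) \<le> e" for t
      by (rule close[where H = G, OF fG(2)]) (use \<open>c a = c b\<close> in \<open>simp add: c_def\<close>)
  qed
qed

lemma add_closed_of_nat_scaleR_mem:
  fixes I :: "'a::real_vector set"
  assumes add: "\<And>a b. a \<in> I \<Longrightarrow> b \<in> I \<Longrightarrow> a + b \<in> I" and "w \<in> I" and "m \<ge> 1"
  shows "real m *\<^sub>R w \<in> I"
  using \<open>m \<ge> 1\<close>
proof (induction m rule: dec_induct)
  case base
  then show ?case using \<open>w \<in> I\<close> by simp
next
  case (step m)
  then show ?case
    using add[OF step.IH \<open>w \<in> I\<close>] by (simp add: scaleR_add_left add.commute)
qed

lemma nonzero_mem_if_bounded_sumset_complement:
  fixes I :: "'a::euclidean_space set"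
  assumes "bounded (UNIV - {a + b | a b. a \<in> I \<union> uminus ` I \<and> b \<in> I \<union> uminus ` I})"
  obtains w where "w \<in> I" and "w \<noteq> 0"
proof (rule ccontr)
  assume "\<not> thesis"
  with that have "I \<subseteq> {0}"
    by blast
  then have "I \<union> uminus ` I \<subseteq> {0}"
    by auto
  then have "{a + b | a b. a \<in> I \<union> uminus ` I \<and> b \<in> I \<union> uminus ` I} \<subseteq> {0}"
    by fastforce
  then have "bounded (UNIV - {0 :: 'a})"
    using assms by (meson Diff_mono bounded_subset order_refl)
  then have "bounded (insert 0 (UNIV - {0 :: 'a}))"
    by (simp only: bounded_insert)
  then show False
    using not_bounded_UNIV by simp
qed

lemma translated_multiples_mem:
  fixes I :: "'a::real_normed_vector set"
  assumes add: "\<And>a b. a \<in> I \<Longrightarrow> b \<in> I \<Longrightarrow> a + b \<in> I"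
    and "w \<in> I" "w \<noteq> 0"
    and trunc: "(\<lambda>x. t + x) ` trunc_set I M \<subseteq> I"
  obtains v where "\<And>m. m \<ge> 1 \<Longrightarrow> t + real m *\<^sub>R v \<in> I"
proof -
  obtain n :: nat where n: "M / norm w \<le> real n"
    using real_arch_simple by blast
  define v where "v = real (Suc n) *\<^sub>R w"
  have "M \<le> real n * norm w"
    using n \<open>w \<noteq> 0\<close> by (simp add: divide_le_eq)
  also have "\<dots> \<le> real (Suc n) * norm w"
    by (simp add: mult_right_mono)
  finally have "M \<le> norm v"
    by (simp add: v_def)
  have "t + real m *\<^sub>R v \<in> I" if "m \<ge> 1" for m
  proof -
    have "1 \<le> m * Suc n"
      using that by (simp add: Suc_le_eq)
    then have "real (m * Suc n) *\<^sub>R w \<in> I"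
      using add_closed_of_nat_scaleR_mem[OF add \<open>w \<in> I\<close>] by blast
    moreover have "real (m * Suc n) *\<^sub>R w = real m *\<^sub>R v"
      by (simp add: v_def algebra_simps)
    ultimately have "real m *\<^sub>R v \<in> I"
      by simp
    moreover have "norm v \<le> norm (real m *\<^sub>R v)"
      using mult_right_mono[of 1 "real m" "norm v"] that by simp
    ultimately have "real m *\<^sub>R v \<in> trunc_set I M"
      using \<open>M \<le> norm v\<close> unfolding trunc_set_def by simp
    then show ?thesis
      using trunc by blast
  qed
  then show ?thesis
    using that by blast
qed

theorem corollary2p36:
  fixes I :: "(real ^ 'n) set"
    and F G :: "real ^ 'n \<Rightarrow> 'y::banach"
  assumes "\<And>a b. a \<in> I \<Longrightarrow> b \<in> I \<Longrightarrow> a + b \<in> I"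
    and "\<And>t'. \<exists>M>0. (\<lambda>x. t' + x) ` trunc_set I M \<subseteq> I"
    and "bounded (UNIV - {a + b | a b. a \<in> I \<union> uminus ` I \<and> b \<in> I \<union> uminus ` I})"
    and "bohr_almost_periodic F"
    and "bohr_almost_periodic G"
    and "\<And>t. t \<in> I \<Longrightarrow> F t = G t"
  shows "\<forall>t. F t = G t"
proof
  fix t
  obtain w where "w \<in> I" "w \<noteq> 0"
    using nonzero_mem_if_bounded_sumset_complement[OF assms(3)] .
  obtain M where "(\<lambda>x. t + x) ` trunc_set I M \<subseteq> I"
    using assms(2) by blast
  then obtain v where v: "\<And>m. m \<ge> 1 \<Longrightarrow> t + real m *\<^sub>R v \<in> I"
    using translated_multiples_mem[OF assms(1) \<open>w \<in> I\<close> \<open>w \<noteq> 0\<close>] by blast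
  have "dist (F t) (G t) \<le> e" if "e > 0" for e
  proof -
    have "e / 2 > 0"
      using \<open>e > 0\<close> by simp
    then obtain k :: nat where "k \<ge> 1"
      and F_close: "\<And>s. dist (F (s + real k *\<^sub>R v)) (F s) \<le> e / 2"
      and G_close: "\<And>s. dist (G (s + real k *\<^sub>R v)) (G s) \<le> e / 2"
      using bohr_almost_periodic_common_period_multiple[where v = v, OF assms(4,5)] by blast
    have "F (t + real k *\<^sub>R v) = G (t + real k *\<^sub>R v)"
      using assms(6) v \<open>k \<ge> 1\<close> by simp
    then have "dist (F t) (G t) \<le> dist (F (t + real k *\<^sub>R v)) (F t) + dist (G (t + real k *\<^sub>R v)) (G t)"
      using dist_triangle2[of "F t" "G t" "F (t + real k *\<^sub>R v)"] by (simp add: dist_commute)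
    with F_close[of t] G_close[of t] show ?thesis
      by linarith
  qed
  then show "F t = G t"
    using field_le_epsilon[of "dist (F t) (G t)" 0] by simp
qed

end
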